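(* Consider metrics on the four-sphere of the form $$ds^2=dr^2+\frac{f(r)^2}{4}(d\theta^2+\sin^2\theta\,d\phi^2)+\frac{g(r)^2}{4}(d\psi+\cos\theta\,d\phi)^2,$$ $0\le r\le\pi$, $0\le\theta\le\pi$, $0\le\phi\le 2\pi$, $0\le\psi\le4\pi$, with $f,g$ smooth, and the system of ordinary differential equations $$\frac{f''}{f}=\frac{f'g'}{fg}-\frac{g^2}{f^4},\qquad \frac{g''}{g}=\frac{f'^2-4}{f^2}+\frac{3g^2}{f^4},$$ which is satisfied by the round four-sphere $f(r)=g(r)=\sin r$ and whose solutions give Einstein metrics of this form. Substitute $f(r)=\sin r+\epsilon p(r)$, $g(r)=\sin r+\epsilon q(r)$ and keep terms of first order in $\epsilon$, obtaining the linearized system $$p''-q=(p'+q')\cot r+\frac{3}{\sin^2 r}(p-q),\qquad q''+q-2p=2p'\cot r-\frac{6}{\sin^2 r}(p-q).$$ Then the pairs $(p,q)$ of smooth (in particular finite) real functions on $[0,\pi]$ solving this linearized system are exactly $$p(r)=q(r)=c_1\cos r+c_2(\sin r-r\cos r),\qquad c_1,c_2\in\mathbb{R}.$$ Moreover, for every such solution, the metric with $f=g=\sin r+\epsilon p$ has Riemann curvature tensor (in the orthonormal frame $e^1=\tfrac f2 d\theta$, $e^2=\tfrac f2\sin\theta\,d\phi$, $e^3=\tfrac g2(d\psi+\cos\theta\,d\phi)$, $e^4=dr$) $$R_{abcd}=(1-2\epsilon c_2)(\delta_{ac}\delta_{bd}-\delta_{ad}\delta_{bc})+O(\epsilon^2),$$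 i.e. to first order in $\epsilon$ it is a conformally flat Einstein metric of constant sectional curvature $1-2\epsilon c_2$, so the deformation changes at most the size of the sphere.
   Context: An Einstein metric is one whose Ricci tensor is a constant multiple of the metric. The round unit four-sphere corresponds to $f=g=\sin r$ and has constant sectional curvature $1$. *)

theory Defs
  imports "HOL-Analysis.Analysis" "HOL-Library.Landau_Symbols"
begin

definition smooth_on_closed :: "real \<Rightarrow> real \<Rightarrow> (real \<Rightarrow> real) \<Rightarrow> bool" where
  "smooth_on_closed a b p \<longleftrightarrow>
     (\<exists>D :: nat \<Rightarrow> real \<Rightarrow> real. (\<forall>x\<in>{a..b}. D 0 x = p x) \<and>
        (\<forall>n. \<forall>x\<in>{a..b}. (D n has_real_derivative D (Suc n) x) (at x within {a..b})))"

text \<open>Points of the chart are coordinate tuples x :: nat => real (only x 0 .. x 3 are used).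
  A metric is given by its component functions G x i j (i, j < 4).\<close>

definition cpd :: "nat \<Rightarrow> ((nat \<Rightarrow> real) \<Rightarrow> real) \<Rightarrow> (nat \<Rightarrow> real) \<Rightarrow> real" where
  "cpd i F x = deriv (\<lambda>t. F (x(i := t))) (x i)"

definition ginv :: "((nat \<Rightarrow> real) \<Rightarrow> nat \<Rightarrow> nat \<Rightarrow> real) \<Rightarrow> (nat \<Rightarrow> real) \<Rightarrow> nat \<Rightarrow> nat \<Rightarrow> real" where
  "ginv G x = (THE H. (\<forall>i<4. \<forall>k<4. (\<Sum>j<4. G x i j * H j k) = (if i = k then 1 else 0)) \<and>
                     (\<forall>i j. (4 \<le> i \<or> 4 \<le> j) \<longrightarrow> H i j = 0))"

definition christoffel :: "((nat \<Rightarrow> real) \<Rightarrow> nat \<Rightarrow> nat \<Rightarrow> real) \<Rightarrow> (nat \<Rightarrow> real) \<Rightarrow> nat \<Rightarrow> nat \<Rightarrow> nat \<Rightarrow> real" where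
  "christoffel G x i k l = (1/2) * (\<Sum>m<4. ginv G x i m *
      (cpd k (\<lambda>y. G y m l) x + cpd l (\<lambda>y. G y m k) x - cpd m (\<lambda>y. G y k l) x))"

definition riemann_up :: "((nat \<Rightarrow> real) \<Rightarrow> nat \<Rightarrow> nat \<Rightarrow> real) \<Rightarrow> (nat \<Rightarrow> real) \<Rightarrow> nat \<Rightarrow> nat \<Rightarrow> nat \<Rightarrow> nat \<Rightarrow> real" where
  "riemann_up G x i j k l =
     cpd k (\<lambda>y. christoffel G y i l j) x - cpd l (\<lambda>y. christoffel G y i k j) x +
     (\<Sum>m<4. christoffel G x i k m * christoffel G x m l j - christoffel G x i l m * christoffel G x m k j)"

text \<open>Fully covariant Riemann tensor R_{ijkl} = g_{im} R^m_{jkl}; with this convention a space of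
  constant sectional curvature K has R_{ijkl} = K (g_{ik} g_{jl} - g_{il} g_{jk}).\<close>
definition riemann :: "((nat \<Rightarrow> real) \<Rightarrow> nat \<Rightarrow> nat \<Rightarrow> real) \<Rightarrow> (nat \<Rightarrow> real) \<Rightarrow> nat \<Rightarrow> nat \<Rightarrow> nat \<Rightarrow> nat \<Rightarrow> real" where
  "riemann G x i j k l = (\<Sum>m<4. G x i m * riemann_up G x m j k l)"

text \<open>Components of the Riemann tensor in a frame E (E x a i = i-th coordinate component of
  the frame vector e_a at x).\<close>
definition frame_riemann ::
  "((nat \<Rightarrow> real) \<Rightarrow> nat \<Rightarrow> nat \<Rightarrow> real) \<Rightarrow> ((nat \<Rightarrow> real) \<Rightarrow> nat \<Rightarrow> nat \<Rightarrow> real) \<Rightarrow> (nat \<Rightarrow> real) \<Rightarrow> nat \<Rightarrow> nat \<Rightarrow> nat \<Rightarrow> nat \<Rightarrow> real" where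
  "frame_riemann G E x a b c d =
     (\<Sum>i<4. \<Sum>j<4. \<Sum>k<4. \<Sum>l<4. riemann G x i j k l * E x a i * E x b j * E x c k * E x d l)"

text \<open>Coordinates: x 0 = r, x 1 = theta, x 2 = phi, x 3 = psi.
  Frame indices: 0,1,2,3 correspond to the paper's e^1, e^2, e^3, e^4
  (e^1 = f/2 dtheta, e^2 = f/2 sin theta dphi, e^3 = g/2 (dpsi + cos theta dphi), e^4 = dr).
  coframe f g x a i = i-th coordinate component of the 1-form e^a.\<close>
definition coframe :: "(real \<Rightarrow> real) \<Rightarrow> (real \<Rightarrow> real) \<Rightarrow> (nat \<Rightarrow> real) \<Rightarrow> nat \<Rightarrow> nat \<Rightarrow> real" where
  "coframe f g x a i =
     (if a = 0 \<and> i = 1 then f (x 0) / 2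
      else if a = 1 \<and> i = 2 then f (x 0) / 2 * sin (x 1)
      else if a = 2 \<and> i = 3 then g (x 0) / 2
      else if a = 2 \<and> i = 2 then g (x 0) / 2 * cos (x 1)
      else if a = 3 \<and> i = 0 then 1
      else 0)"

definition s4_metric :: "(real \<Rightarrow> real) \<Rightarrow> (real \<Rightarrow> real) \<Rightarrow> (nat \<Rightarrow> real) \<Rightarrow> nat \<Rightarrow> nat \<Rightarrow> real" where
  "s4_metric f g x i j = (\<Sum>a<4. coframe f g x a i * coframe f g x a j)"

text \<open>The dual orthonormal frame: e_1 = (2/f) d_theta, e_2 = (2/(f sin theta))(d_phi - cos theta d_psi),
  e_3 = (2/g) d_psi, e_4 = d_r.  frame f g x a i = i-th coordinate component of e_a.\<close>
definition s4_frame :: "(real \<Rightarrow> real) \<Rightarrow> (real \<Rightarrow> real) \<Rightarrow> (nat \<Rightarrow> real) \<Rightarrow> nat \<Rightarrow> nat \<Rightarrow> real" where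
  "s4_frame f g x a i =
     (if a = 0 \<and> i = 1 then 2 / f (x 0)
      else if a = 1 \<and> i = 2 then 2 / (f (x 0) * sin (x 1))
      else if a = 1 \<and> i = 3 then - 2 * cos (x 1) / (f (x 0) * sin (x 1))
      else if a = 2 \<and> i = 3 then 2 / g (x 0)
      else if a = 3 \<and> i = 0 then 1
      else 0)"

end

theory Submission
  imports Defs
begin

text \<open>
  With f = g the metric is the warped product dr^2 + f(r)^2 g_S3 over the round unit 3-sphere
  (the Berger sphere with equal axes is round). Its curvature tensor is (K_t/2) g * g +
  (K_r - K_t) dr^2 * g, with * the Kulkarni-Nomizu product, K_t = (1 - f'^2)/f^2 the curvature of
  the tangential planes and K_r = -f''/f that of the radial planes. For f = sin r + \<epsilon> h with
  h = c1 cos r + c2 (sin r - r cos r) both are 1 - 2 \<epsilon> c2 + O(\<epsilon>^2), because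
  h sin r + h' cos r = c2 sin^2 r and h'' + h = 2 c2 sin r.

  The linearized system decouples: v = (p - q) sin^3 r solves v'' = 5 cot r v' + 4 v, whose
  solutions (1 - cos r)^3 (3 + cos r) and (1 + cos r)^3 (3 - cos r) each vanish at only one pole,
  so v = 0 and p = q. Then p'' = 2 cot r p' + p, which is solved by cos r and sin r - r cos r.
\<close>

section \<open>Second-order linear ODEs\<close>

definition solves_linear_ode2 ::
  "(real \<Rightarrow> real) \<Rightarrow> (real \<Rightarrow> real) \<Rightarrow> real set \<Rightarrow> (real \<Rightarrow> real) \<Rightarrow> (real \<Rightarrow> real) \<Rightarrow> (real \<Rightarrow> real) \<Rightarrow> bool"
  where
  "solves_linear_ode2 P Q S y y' y'' \<longleftrightarrow>
     (\<forall>r\<in>S. (y has_real_derivative y' r) (at r) \<and> (y' has_real_derivative y'' r) (at r) \<and>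
            y'' r = P r * y' r + Q r * y r)"

lemma abel_wronskian_constant:
  assumes "convex S" and y: "solves_linear_ode2 P Q S y y' y''" and z: "solves_linear_ode2 P Q S z z' z''"
    and E: "\<And>r. r \<in> S \<Longrightarrow> (E has_real_derivative - P r * E r) (at r)"
  obtains A where "\<And>r. r \<in> S \<Longrightarrow> (y r * z' r - y' r * z r) * E r = A"
proof -
  have "\<exists>A. \<forall>r\<in>S. (y r * z' r - y' r * z r) * E r = A"
  proof (rule has_field_derivative_zero_constant[OF \<open>convex S\<close>])
    fix r assume r: "r \<in> S"
    have "((\<lambda>r. (y r * z' r - y' r * z r) * E r) has_real_derivative
            (y r * z'' r - y'' r * z r) * E r - (y r * z' r - y' r * z r) * P r * E r) (at r)"
      using y z r unfolding solves_linear_ode2_def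
      by (auto intro!: derivative_eq_intros E[OF r] simp: algebra_simps)
    moreover have "(y r * z'' r - y'' r * z r) * E r - (y r * z' r - y' r * z r) * P r * E r = 0"
      using y z r unfolding solves_linear_ode2_def by (simp add: algebra_simps)
    ultimately show "((\<lambda>r. (y r * z' r - y' r * z r) * E r) has_real_derivative 0) (at r within S)"
      by (simp add: has_field_derivative_at_within)
  qed
  then show thesis using that by blast
qed

lemma linear_ode2_span:
  assumes "convex S" and w: "solves_linear_ode2 P Q S w w' w''"
    and ya: "solves_linear_ode2 P Q S ya ya' ya''" and yb: "solves_linear_ode2 P Q S yb yb' yb''"
    and E: "\<And>r. r \<in> S \<Longrightarrow> (E has_real_derivative - P r * E r) (at r)"
    and K: "K \<noteq> 0" "\<And>r. r \<in> S \<Longrightarrow> (ya r * yb' r - ya' r * yb r) * E r = K"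
  shows "\<exists>\<alpha> \<beta>. \<forall>r\<in>S. w r = \<alpha> * ya r + \<beta> * yb r"
proof -
  obtain A where A: "\<And>r. r \<in> S \<Longrightarrow> (w r * ya' r - w' r * ya r) * E r = A"
    using abel_wronskian_constant[OF \<open>convex S\<close> w ya E] by blast
  obtain B where B: "\<And>r. r \<in> S \<Longrightarrow> (w r * yb' r - w' r * yb r) * E r = B"
    using abel_wronskian_constant[OF \<open>convex S\<close> w yb E] by blast
  have "w r = B / K * ya r - A / K * yb r" if r: "r \<in> S" for r
  proof -
    have "w r * K = w r * ((ya r * yb' r - ya' r * yb r) * E r)"
      using K(2)[OF r] by simp
    also have "\<dots> = ((w r * yb' r - w' r * yb r) * E r) * ya r - ((w r * ya' r - w' r * ya r) * E r) * yb r"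
      by (simp add: algebra_simps)
    also have "\<dots> = B * ya r - A * yb r"
      using A[OF r] B[OF r] by simp
    finally show ?thesis using K(1) by (simp add: field_simps)
  qed
  then show ?thesis by (metis diff_conv_add_uminus mult_minus_left)
qed

lemma continuous_on_closed_interval_eq:
  fixes f g :: "real \<Rightarrow> real"
  assumes "a < b" "continuous_on {a..b} f" "continuous_on {a..b} g"
    and "\<And>r. r \<in> {a<..<b} \<Longrightarrow> f r = g r" and "r \<in> {a..b}"
  shows "f r = g r"
proof -
  have cl: "closure {a<..<b} = {a..b}" using \<open>a < b\<close> by simp
  have "(\<lambda>t. f t - g t) r = 0"
    by (rule continuous_constant_on_closure[of "{a<..<b}"])
      (use assms cl in \<open>auto intro: continuous_on_diff\<close>)
  then show ?thesis by simp
qed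

lemma deriv_eq_on_open:
  assumes "open S" "\<And>t. t \<in> S \<Longrightarrow> f t = g t" "r \<in> S"
  shows "deriv f r = deriv g r"
  using assms by (intro deriv_cong_ev) (auto simp: eventually_nhds)

lemma smooth_on_closedE:
  assumes "smooth_on_closed a b p"
  obtains p' p'' where "continuous_on {a..b} p"
    "\<And>r. r \<in> {a<..<b} \<Longrightarrow> (p has_real_derivative p' r) (at r)"
    "\<And>r. r \<in> {a<..<b} \<Longrightarrow> (p' has_real_derivative p'' r) (at r)"
    "\<And>r. r \<in> {a<..<b} \<Longrightarrow> deriv p r = p' r"
    "\<And>r. r \<in> {a<..<b} \<Longrightarrow> deriv (deriv p) r = p'' r"
proof -
  obtain D where D0: "\<forall>x\<in>{a..b}. D 0 x = p x"
    and D: "\<forall>n. \<forall>x\<in>{a..b}. (D n has_real_derivative D (Suc n) x) (at x within {a..b})"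
    using assms unfolding smooth_on_closed_def by blast
  have D_at: "(D n has_real_derivative D (Suc n) r) (at r)" if r: "r \<in> {a<..<b}" for n r
  proof -
    have "at r within {a..b} = at r"
      using r by (intro at_within_interior) simp
    moreover have "r \<in> {a..b}" using r by auto
    ultimately show ?thesis using D by metis
  qed
  have "continuous_on {a..b} (D 0)"
    unfolding continuous_on_eq_continuous_within using D DERIV_continuous by blast
  then have cont: "continuous_on {a..b} p"
    using continuous_on_cong[OF refl, of "{a..b}" "D 0" p] D0 by auto
  have dp: "(p has_real_derivative D (Suc 0) r) (at r)" if r: "r \<in> {a<..<b}" for r
    by (rule has_field_derivative_transform_within_open[OF D_at[OF r] open_greaterThanLessThan r])
      (use D0 in auto)
  then have d1: "deriv p r = D (Suc 0) r" if "r \<in> {a<..<b}" for r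
    using that by (simp add: DERIV_imp_deriv)
  have dd: "(deriv p has_real_derivative D (Suc (Suc 0)) r) (at r)" if r: "r \<in> {a<..<b}" for r
    by (rule has_field_derivative_transform_within_open[OF D_at[OF r] open_greaterThanLessThan r])
      (use d1 in auto)
  then have "deriv (deriv p) r = D (Suc (Suc 0)) r" if "r \<in> {a<..<b}" for r
    using that by (simp add: DERIV_imp_deriv)
  with cont dp D_at d1 show thesis
    by (intro that[of "D (Suc 0)" "D (Suc (Suc 0))"])
qed

lemma sin_ne_zero_pi_interval: "r \<in> {0<..<pi} \<Longrightarrow> sin r \<noteq> 0"
  using sin_gt_zero by fastforce

lemma cot_ode_solution_north:
  "solves_linear_ode2 (\<lambda>r. 5 * cos r / sin r) (\<lambda>r. 4) {0<..<pi}
     (\<lambda>r. (1 - cos r) ^ 3 * (3 + cos r))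
     (\<lambda>r. 4 * sin r * (1 - cos r)\<^sup>2 * (2 + cos r))
     (\<lambda>r. 4 * cos r * (1 - cos r)\<^sup>2 * (2 + cos r) + 12 * (sin r)\<^sup>2 * (1 - cos r) * (1 + cos r))"
  unfolding solves_linear_ode2_def
proof (intro ballI conjI)
  fix r :: real assume "r \<in> {0<..<pi}"
  then have s: "sin r \<noteq> 0" by (rule sin_ne_zero_pi_interval)
  have s2: "(sin r)\<^sup>2 = 1 - (cos r)\<^sup>2" by (simp add: sin_squared_eq)
  show "((\<lambda>r. (1 - cos r) ^ 3 * (3 + cos r)) has_real_derivative
          4 * sin r * (1 - cos r)\<^sup>2 * (2 + cos r)) (at r)"
    "((\<lambda>r. 4 * sin r * (1 - cos r)\<^sup>2 * (2 + cos r)) has_real_derivative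
        4 * cos r * (1 - cos r)\<^sup>2 * (2 + cos r) + 12 * (sin r)\<^sup>2 * (1 - cos r) * (1 + cos r)) (at r)"
    by (auto intro!: derivative_eq_intros simp: algebra_simps power2_eq_square power3_eq_cube)
  show "4 * cos r * (1 - cos r)\<^sup>2 * (2 + cos r) + 12 * (sin r)\<^sup>2 * (1 - cos r) * (1 + cos r) =
          5 * cos r / sin r * (4 * sin r * (1 - cos r)\<^sup>2 * (2 + cos r)) + 4 * ((1 - cos r) ^ 3 * (3 + cos r))"
    using s unfolding s2 by (simp add: field_simps) (simp add: algebra_simps power2_eq_square power3_eq_cube)
qed

lemma cot_ode_solution_south:
  "solves_linear_ode2 (\<lambda>r. 5 * cos r / sin r) (\<lambda>r. 4) {0<..<pi}
     (\<lambda>r. (1 + cos r) ^ 3 * (3 - cos r))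
     (\<lambda>r. - 4 * sin r * (1 + cos r)\<^sup>2 * (2 - cos r))
     (\<lambda>r. - 4 * cos r * (1 + cos r)\<^sup>2 * (2 - cos r) + 12 * (sin r)\<^sup>2 * (1 + cos r) * (1 - cos r))"
  unfolding solves_linear_ode2_def
proof (intro ballI conjI)
  fix r :: real assume "r \<in> {0<..<pi}"
  then have s: "sin r \<noteq> 0" by (rule sin_ne_zero_pi_interval)
  have s2: "(sin r)\<^sup>2 = 1 - (cos r)\<^sup>2" by (simp add: sin_squared_eq)
  show "((\<lambda>r. (1 + cos r) ^ 3 * (3 - cos r)) has_real_derivative
          - 4 * sin r * (1 + cos r)\<^sup>2 * (2 - cos r)) (at r)"
    "((\<lambda>r. - 4 * sin r * (1 + cos r)\<^sup>2 * (2 - cos r)) has_real_derivative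
        - 4 * cos r * (1 + cos r)\<^sup>2 * (2 - cos r) + 12 * (sin r)\<^sup>2 * (1 + cos r) * (1 - cos r)) (at r)"
    by (auto intro!: derivative_eq_intros simp: algebra_simps power2_eq_square power3_eq_cube)
  show "- 4 * cos r * (1 + cos r)\<^sup>2 * (2 - cos r) + 12 * (sin r)\<^sup>2 * (1 + cos r) * (1 - cos r) =
          5 * cos r / sin r * (- 4 * sin r * (1 + cos r)\<^sup>2 * (2 - cos r)) + 4 * ((1 + cos r) ^ 3 * (3 - cos r))"
    using s unfolding s2 by (simp add: field_simps) (simp add: algebra_simps power2_eq_square power3_eq_cube)
qed

lemma cot_ode_dirichlet_trivial:
  assumes v: "solves_linear_ode2 (\<lambda>r. 5 * cos r / sin r) (\<lambda>r. 4) {0<..<pi} v v' v''"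
    and cont: "continuous_on {0..pi} v" and "v 0 = 0" "v pi = 0" and r: "r \<in> {0<..<pi}"
  shows "v r = 0"
proof -
  let ?y1 = "\<lambda>r. (1 - cos r) ^ 3 * (3 + cos r)" and ?y2 = "\<lambda>r. (1 + cos r) ^ 3 * (3 - cos r)"
  have E: "((\<lambda>r. 1 / sin r ^ 5) has_real_derivative - (5 * cos r / sin r) * (1 / sin r ^ 5)) (at r)"
    if "r \<in> {0<..<pi}" for r
    using sin_ne_zero_pi_interval[OF that]
    by (auto intro!: derivative_eq_intros simp: field_simps eval_nat_numeral)
  have W: "(?y1 r * (- 4 * sin r * (1 + cos r)\<^sup>2 * (2 - cos r))
            - 4 * sin r * (1 - cos r)\<^sup>2 * (2 + cos r) * ?y2 r) * (1 / sin r ^ 5) = - 48"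
    if "r \<in> {0<..<pi}" for r
  proof -
    have s2: "(sin r)\<^sup>2 = 1 - (cos r)\<^sup>2" by (simp add: sin_squared_eq)
    have s5: "sin r ^ 5 = sin r * ((sin r)\<^sup>2)\<^sup>2" by (simp add: eval_nat_numeral)
    have "?y1 r * (- 4 * sin r * (1 + cos r)\<^sup>2 * (2 - cos r))
            - 4 * sin r * (1 - cos r)\<^sup>2 * (2 + cos r) * ?y2 r = - 48 * sin r ^ 5"
      unfolding s5 s2 by (simp add: algebra_simps power2_eq_square power3_eq_cube)
    then show ?thesis using sin_ne_zero_pi_interval[OF that] by simp
  qed
  obtain \<alpha> \<beta> where span: "\<forall>r\<in>{0<..<pi}. v r = \<alpha> * ?y1 r + \<beta> * ?y2 r"
    using linear_ode2_span[OF convex_real_interval(8) v cot_ode_solution_north cot_ode_solution_south E, of "- 48"] W by auto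
  have "continuous_on {0..pi} (\<lambda>r. \<alpha> * ?y1 r + \<beta> * ?y2 r)"
    by (intro continuous_intros)
  then have "v t = \<alpha> * ?y1 t + \<beta> * ?y2 t" if "t \<in> {0..pi}" for t
    using continuous_on_closed_interval_eq[OF pi_gt_zero cont _ _ that] span by blast
  from this[of 0] this[of pi] have "\<beta> = 0" "\<alpha> = 0"
    using \<open>v 0 = 0\<close> \<open>v pi = 0\<close> by simp_all
  then show ?thesis using span r by simp
qed

definition linearized_solution :: "real \<Rightarrow> real \<Rightarrow> real \<Rightarrow> real" where
  "linearized_solution c1 c2 r = c1 * cos r + c2 * (sin r - r * cos r)"

lemma cot2_ode_solutions:
  assumes p: "solves_linear_ode2 (\<lambda>r. 2 * cos r / sin r) (\<lambda>r. 1) {0<..<pi} p p' p''"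
  shows "\<exists>c1 c2. \<forall>r\<in>{0<..<pi}. p r = linearized_solution c1 c2 r"
proof -
  have cos: "solves_linear_ode2 (\<lambda>r. 2 * cos r / sin r) (\<lambda>r. 1) {0<..<pi} cos (\<lambda>r. - sin r) (\<lambda>r. - cos r)"
    unfolding solves_linear_ode2_def using sin_ne_zero_pi_interval
    by (auto intro!: derivative_eq_intros)
  have sin: "solves_linear_ode2 (\<lambda>r. 2 * cos r / sin r) (\<lambda>r. 1) {0<..<pi}
      (\<lambda>r. sin r - r * cos r) (\<lambda>r. r * sin r) (\<lambda>r. sin r + r * cos r)"
    unfolding solves_linear_ode2_def using sin_ne_zero_pi_interval
    by (auto intro!: derivative_eq_intros simp: field_simps)
  have E: "((\<lambda>r. 1 / (sin r)\<^sup>2) has_real_derivative - (2 * cos r / sin r) * (1 / (sin r)\<^sup>2)) (at r)"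
    if "r \<in> {0<..<pi}" for r
    using sin_ne_zero_pi_interval[OF that]
    by (auto intro!: derivative_eq_intros simp: field_simps power2_eq_square power3_eq_cube)
  have W: "(cos r * (r * sin r) - - sin r * (sin r - r * cos r)) * (1 / (sin r)\<^sup>2) = 1"
    if "r \<in> {0<..<pi}" for r
    using sin_ne_zero_pi_interval[OF that] by (simp add: field_simps power2_eq_square)
  show ?thesis
    using linear_ode2_span[OF convex_real_interval(8) p cos sin E, of 1] W
    by (simp add: linearized_solution_def)
qed

section \<open>The linearized Einstein equations\<close>

definition linearized_einstein :: "(real \<Rightarrow> real) \<Rightarrow> (real \<Rightarrow> real) \<Rightarrow> bool" where
  "linearized_einstein p q \<longleftrightarrow>
     (\<forall>r\<in>{0<..<pi}.
        deriv (deriv p) r - q r = (deriv p r + deriv q r) * cot r + 3 / (sin r)\<^sup>2 * (p r - q r) \<and>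
        deriv (deriv q) r + q r - 2 * p r = 2 * deriv p r * cot r - 6 / (sin r)\<^sup>2 * (p r - q r))"

text \<open>The two sides are v'' and 5 cot r v' + 4 v for v = (p - q) sin^3 r.\<close>
lemma linearized_difference_ode:
  fixes s c P Q P' Q' P'' Q'' :: real
  assumes s: "s \<noteq> 0" and pyth: "s\<^sup>2 + c\<^sup>2 = 1"
    and eq1: "P'' - Q = (P' + Q') * (c / s) + 3 / s\<^sup>2 * (P - Q)"
    and eq2: "Q'' + Q - 2 * P = 2 * P' * (c / s) - 6 / s\<^sup>2 * (P - Q)"
  shows "(P'' - Q'') * s ^ 3 + 6 * (P' - Q') * s\<^sup>2 * c + (P - Q) * (6 * s * c\<^sup>2 - 3 * s ^ 3)
         = 5 * c / s * ((P' - Q') * s ^ 3 + 3 * (P - Q) * s\<^sup>2 * c) + 4 * ((P - Q) * s ^ 3)"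
proof -
  have P'': "P'' = Q + (P' + Q') * (c / s) + 3 / s\<^sup>2 * (P - Q)" using eq1 by linarith
  have Q'': "Q'' = 2 * P - Q + 2 * P' * (c / s) - 6 / s\<^sup>2 * (P - Q)" using eq2 by linarith
  have "(P'' - Q'') * s ^ 3 + 6 * (P' - Q') * s\<^sup>2 * c + (P - Q) * (6 * s * c\<^sup>2 - 3 * s ^ 3)
        - (5 * c / s * ((P' - Q') * s ^ 3 + 3 * (P - Q) * s\<^sup>2 * c) + 4 * ((P - Q) * s ^ 3))
        = 9 * (P - Q) * s * (1 - s\<^sup>2 - c\<^sup>2)"
    unfolding P'' Q'' using s by (simp add: field_simps power2_eq_square power3_eq_cube)
  also have "\<dots> = 0"
    using pyth by simp
  finally show ?thesis by simp
qed

lemma linearized_einstein_imp_eq: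
  assumes sp: "smooth_on_closed 0 pi p" and sq: "smooth_on_closed 0 pi q"
    and sys: "linearized_einstein p q" and r: "r \<in> {0..pi}"
  shows "p r = q r"
proof -
  obtain p' p'' where cp: "continuous_on {0..pi} p"
    and dp: "\<And>r. r \<in> {0<..<pi} \<Longrightarrow> (p has_real_derivative p' r) (at r)"
    and dp': "\<And>r. r \<in> {0<..<pi} \<Longrightarrow> (p' has_real_derivative p'' r) (at r)"
    and ep: "\<And>r. r \<in> {0<..<pi} \<Longrightarrow> deriv p r = p' r" "\<And>r. r \<in> {0<..<pi} \<Longrightarrow> deriv (deriv p) r = p'' r"
    using smooth_on_closedE[OF sp] by blast
  obtain q' q'' where cq: "continuous_on {0..pi} q"
    and dq: "\<And>r. r \<in> {0<..<pi} \<Longrightarrow> (q has_real_derivative q' r) (at r)"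
    and dq': "\<And>r. r \<in> {0<..<pi} \<Longrightarrow> (q' has_real_derivative q'' r) (at r)"
    and eq: "\<And>r. r \<in> {0<..<pi} \<Longrightarrow> deriv q r = q' r" "\<And>r. r \<in> {0<..<pi} \<Longrightarrow> deriv (deriv q) r = q'' r"
    using smooth_on_closedE[OF sq] by blast
  define v where "v r = (p r - q r) * sin r ^ 3" for r
  define v' where "v' r = (p' r - q' r) * sin r ^ 3 + 3 * (p r - q r) * (sin r)\<^sup>2 * cos r" for r
  define v'' where "v'' r = (p'' r - q'' r) * sin r ^ 3 + 6 * (p' r - q' r) * (sin r)\<^sup>2 * cos r
      + (p r - q r) * (6 * sin r * (cos r)\<^sup>2 - 3 * sin r ^ 3)" for r
  have ode: "solves_linear_ode2 (\<lambda>r. 5 * cos r / sin r) (\<lambda>r. 4) {0<..<pi} v v' v''"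
    unfolding solves_linear_ode2_def
  proof (intro ballI conjI)
    fix r :: real assume r: "r \<in> {0<..<pi}"
    show "(v has_real_derivative v' r) (at r)"
      unfolding v_def v'_def
      by (auto intro!: derivative_eq_intros dp[OF r] dq[OF r] simp: algebra_simps power2_eq_square power3_eq_cube)
    show "(v' has_real_derivative v'' r) (at r)"
      unfolding v'_def[abs_def] v''_def
      by (auto intro!: derivative_eq_intros dp[OF r] dq[OF r] dp'[OF r] dq'[OF r]
          simp: algebra_simps power2_eq_square power3_eq_cube)
    show "v'' r = 5 * cos r / sin r * v' r + 4 * v r"
      using sys r unfolding v_def v'_def v''_def linearized_einstein_def cot_def
      by (intro linearized_difference_ode sin_ne_zero_pi_interval sin_cos_squared_add)
        (simp_all add: ep eq)
  qed
  have "continuous_on {0..pi} v"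
    unfolding v_def by (intro continuous_intros cp cq)
  then have "v t = 0" if "t \<in> {0<..<pi}" for t
    by (rule cot_ode_dirichlet_trivial[OF ode _ _ _ that]) (simp_all add: v_def)
  then have "p t = q t" if "t \<in> {0<..<pi}" for t
    using that sin_ne_zero_pi_interval[OF that] by (auto simp: v_def)
  then show ?thesis
    using continuous_on_closed_interval_eq[OF pi_gt_zero cp cq _ r] by blast
qed

lemma linearized_einstein_diagonal:
  assumes sp: "smooth_on_closed 0 pi p" and sys: "linearized_einstein p p"
  shows "\<exists>c1 c2. \<forall>r\<in>{0..pi}. p r = linearized_solution c1 c2 r"
proof -
  obtain p' p'' where cp: "continuous_on {0..pi} p"
    and dp: "\<And>r. r \<in> {0<..<pi} \<Longrightarrow> (p has_real_derivative p' r) (at r)"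
    and dp': "\<And>r. r \<in> {0<..<pi} \<Longrightarrow> (p' has_real_derivative p'' r) (at r)"
    and ep: "\<And>r. r \<in> {0<..<pi} \<Longrightarrow> deriv p r = p' r" "\<And>r. r \<in> {0<..<pi} \<Longrightarrow> deriv (deriv p) r = p'' r"
    using smooth_on_closedE[OF sp] by blast
  have "solves_linear_ode2 (\<lambda>r. 2 * cos r / sin r) (\<lambda>r. 1) {0<..<pi} p p' p''"
    using sys dp dp' unfolding solves_linear_ode2_def linearized_einstein_def cot_def
    by (auto simp: ep algebra_simps)
  then obtain c1 c2 where sol: "\<forall>r\<in>{0<..<pi}. p r = linearized_solution c1 c2 r"
    using cot2_ode_solutions by blast
  have "continuous_on {0..pi} (linearized_solution c1 c2)"
    unfolding linearized_solution_def by (intro continuous_intros)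
  then show ?thesis
    using continuous_on_closed_interval_eq[OF pi_gt_zero cp] sol by blast
qed

lemma linearized_solution_solves:
  assumes "\<forall>r\<in>{0..pi}. p r = linearized_solution c1 c2 r \<and> q r = linearized_solution c1 c2 r"
  shows "linearized_einstein p q"
  unfolding linearized_einstein_def
proof
  fix r :: real assume r: "r \<in> {0<..<pi}"
  define h' where "h' t = - c1 * sin t + c2 * (t * sin t)" for t :: real
  define h'' where "h'' t = - c1 * cos t + c2 * (sin t + t * cos t)" for t :: real
  have "deriv (linearized_solution c1 c2) = h'"
    unfolding linearized_solution_def[abs_def] h'_def
    by (intro ext DERIV_imp_deriv) (auto intro!: derivative_eq_intros simp: algebra_simps)
  moreover have "deriv h' = h''"
    unfolding h'_def[abs_def] h''_def
    by (intro ext DERIV_imp_deriv) (auto intro!: derivative_eq_intros simp: algebra_simps)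
  moreover have "deriv f r = deriv (linearized_solution c1 c2) r"
    "deriv (deriv f) r = deriv (deriv (linearized_solution c1 c2)) r"
    if "\<forall>t\<in>{0<..<pi}. f t = linearized_solution c1 c2 t" for f
    using that r by (auto intro!: deriv_eq_on_open[of "{0<..<pi}"])
  moreover have "p r = linearized_solution c1 c2 r" "q r = linearized_solution c1 c2 r"
    using assms r by auto
  moreover have "h'' r - linearized_solution c1 c2 r = 2 * h' r * (cos r / sin r)"
    using sin_ne_zero_pi_interval[OF r]
    unfolding h''_def h'_def linearized_solution_def by (simp add: field_simps)
  ultimately show "deriv (deriv p) r - q r = (deriv p r + deriv q r) * cot r + 3 / (sin r)\<^sup>2 * (p r - q r) \<and>
      deriv (deriv q) r + q r - 2 * p r = 2 * deriv p r * cot r - 6 / (sin r)\<^sup>2 * (p r - q r)"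
    using assms unfolding cot_def by (simp add: algebra_simps)
qed

lemma linearized_einstein_iff:
  assumes sp: "smooth_on_closed 0 pi p" and sq: "smooth_on_closed 0 pi q"
  shows "linearized_einstein p q \<longleftrightarrow>
           (\<exists>c1 c2. \<forall>r\<in>{0..pi}. p r = linearized_solution c1 c2 r \<and> q r = linearized_solution c1 c2 r)"
proof
  assume sys: "linearized_einstein p q"
  have pq: "p r = q r" if "r \<in> {0..pi}" for r
    using linearized_einstein_imp_eq[OF sp sq sys that] .
  have "deriv q r = deriv p r" "deriv (deriv q) r = deriv (deriv p) r" if "r \<in> {0<..<pi}" for r
    using pq that by (auto intro!: deriv_eq_on_open[of "{0<..<pi}"])
  with sys pq have "linearized_einstein p p"
    unfolding linearized_einstein_def by auto
  with pq show "\<exists>c1 c2. \<forall>r\<in>{0..pi}. p r = linearized_solution c1 c2 r \<and> q r = linearized_solution c1 c2 r"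
    using linearized_einstein_diagonal[OF sp] by metis
next
  assume "\<exists>c1 c2. \<forall>r\<in>{0..pi}. p r = linearized_solution c1 c2 r \<and> q r = linearized_solution c1 c2 r"
  then show "linearized_einstein p q"
    using linearized_solution_solves by blast
qed

section \<open>The metric dr^2 + f(r)^2 g_S3 in coordinates\<close>

lemma sum_lessThan_4: "(\<Sum>a<(4::nat). f a) = f 0 + f 1 + f 2 + (f 3 :: real)"
  by (simp add: eval_nat_numeral)

lemma less_4_cases: "(i::nat) < 4 \<Longrightarrow> i = 0 \<or> i = 1 \<or> i = 2 \<or> i = 3"
  by auto

lemma inverse_matrix_unique:
  fixes G H L :: "nat \<Rightarrow> nat \<Rightarrow> real"
  assumes left: "\<forall>i<n. \<forall>k<n. (\<Sum>j<n. L i j * G j k) = (if i = k then 1 else 0)"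
    and right: "\<forall>i<n. \<forall>k<n. (\<Sum>j<n. G i j * H j k) = (if i = k then 1 else 0)"
    and "i < n" "k < n"
  shows "H i k = L i k"
proof -
  have "H i k = (\<Sum>j<n. (if i = j then 1 else 0) * H j k)"
    using \<open>i < n\<close> by (simp add: mult_if_delta)
  also have "\<dots> = (\<Sum>j<n. (\<Sum>m<n. L i m * G m j) * H j k)"
    using left \<open>i < n\<close> by (intro sum.cong) auto
  also have "\<dots> = (\<Sum>j<n. \<Sum>m<n. L i m * (G m j * H j k))"
    by (simp add: sum_distrib_right mult.assoc)
  also have "\<dots> = (\<Sum>m<n. L i m * (\<Sum>j<n. G m j * H j k))"
    by (subst sum.swap) (simp add: sum_distrib_left)
  also have "\<dots> = (\<Sum>m<n. if m = k then L i m else 0)"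
    using right \<open>k < n\<close> by (intro sum.cong) auto
  also have "\<dots> = L i k"
    using \<open>k < n\<close> by simp
  finally show ?thesis .
qed

definition radial :: "nat \<Rightarrow> real" where
  "radial i = (if i = 0 then 1 else 0)"

definition euler_diag :: "nat \<Rightarrow> nat \<Rightarrow> real" where
  "euler_diag k l = (if (k = 1 \<and> l = 1) \<or> (k = 2 \<and> l = 2) \<or> (k = 3 \<and> l = 3) then 1 else 0)"

definition euler_cross :: "nat \<Rightarrow> nat \<Rightarrow> real" where
  "euler_cross k l = (if (k = 2 \<and> l = 3) \<or> (k = 3 \<and> l = 2) then 1 else 0)"

text \<open>Four times the round unit 3-sphere in Euler angles (x 1, x 2, x 3) = (theta, phi, psi).\<close>
definition s3_metric :: "real \<Rightarrow> nat \<Rightarrow> nat \<Rightarrow> real" where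
  "s3_metric th k l = euler_diag k l + cos th * euler_cross k l"

definition warped_metric :: "real \<Rightarrow> real \<Rightarrow> nat \<Rightarrow> nat \<Rightarrow> real" where
  "warped_metric f th i j = radial i * radial j + f\<^sup>2 / 4 * s3_metric th i j"

definition warped_metric_inv :: "real \<Rightarrow> real \<Rightarrow> nat \<Rightarrow> nat \<Rightarrow> real" where
  "warped_metric_inv f th i j = radial i * radial j + 4 / f\<^sup>2 * ((if i = 1 \<and> j = 1 then 1 else 0)
     + 1 / (sin th)\<^sup>2 * ((if (i = 2 \<and> j = 2) \<or> (i = 3 \<and> j = 3) then 1 else 0) - cos th * euler_cross i j))"

lemma s4_metric_diagonal: "s4_metric F F y i j = warped_metric (F (y 0)) (y 1) i j"
proof -
  have rot: "a * sin t * (a * sin t) + a * cos t * (a * cos t) = a * a" for a t :: real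
  proof -
    have "a * sin t * (a * sin t) + a * cos t * (a * cos t) = a * a * (cos t * cos t + sin t * sin t)"
      by (simp only: distrib_left mult_ac)
    then show ?thesis by (simp only: sin_cos_squared_add3 mult_1_right)
  qed
  have "coframe F F y a i = 0" if "4 \<le> i" for a i
    using that by (simp add: coframe_def)
  moreover have "i = 0 \<or> i = 1 \<or> i = 2 \<or> i = 3 \<or> i \<ge> 4" "j = 0 \<or> j = 1 \<or> j = 2 \<or> j = 3 \<or> j \<ge> 4"
    by auto
  ultimately show ?thesis
    by (elim disjE)
      (simp_all add: s4_metric_def warped_metric_def s3_metric_def radial_def euler_diag_def
        euler_cross_def coframe_def sum_lessThan_4 power2_eq_square rot)
qed

lemma warped_metric_sym: "warped_metric f th i j = warped_metric f th j i"
  unfolding warped_metric_def s3_metric_def euler_diag_def euler_cross_def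
  by (simp add: mult.commute disj_commute)

lemma warped_metric_inv_sym: "warped_metric_inv f th i j = warped_metric_inv f th j i"
  unfolding warped_metric_inv_def euler_cross_def
  by (simp add: mult.commute disj_commute conj_commute)

lemma warped_metric_inv_right:
  assumes f: "f \<noteq> 0" and s: "sin th \<noteq> 0" and "i < 4" "k < 4"
  shows "(\<Sum>j<4. warped_metric f th i j * warped_metric_inv f th j k) = (if i = k then 1 else 0)"
proof -
  have sq: "(sin th)\<^sup>2 = 1 - (cos th)\<^sup>2" by (simp add: sin_squared_eq)
  have s2: "1 - (cos th)\<^sup>2 \<noteq> 0" using s by (simp add: sq[symmetric])
  have csc: "1 + cos th * cos th / (sin th * sin th) = 1 / (sin th * sin th)"
  proof -
    have "1 + cos th * cos th / (sin th * sin th) = (cos th * cos th + sin th * sin th) / (sin th * sin th)"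
      using s by (simp add: field_simps)
    then show ?thesis by simp
  qed
  from \<open>i < 4\<close> \<open>k < 4\<close> show ?thesis
    unfolding sum_lessThan_4 warped_metric_inv_def warped_metric_def s3_metric_def radial_def
      euler_diag_def euler_cross_def
    apply (simp add: less_Suc_eq numeral_eq_Suc)
    apply (elim disjE)
    apply (simp_all add: sq field_simps s2 f)
    apply (rule csc[symmetric])+
    done
qed

lemma warped_metric_inv_left:
  assumes "f \<noteq> 0" "sin th \<noteq> 0" "i < 4" "k < 4"
  shows "(\<Sum>j<4. warped_metric_inv f th i j * warped_metric f th j k) = (if i = k then 1 else 0)"
  using warped_metric_inv_right[OF assms(1,2,4,3)]
  by (simp add: warped_metric_sym[of f th _ k] warped_metric_inv_sym[of f th i] mult.commute eq_commute)

lemma ginv_warped_metric: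
  assumes G: "\<And>i j. G y i j = warped_metric f th i j" and f: "f \<noteq> 0" and s: "sin th \<noteq> 0"
  shows "ginv G y = warped_metric_inv f th"
  unfolding ginv_def
proof (rule the_equality)
  show "(\<forall>i<4. \<forall>k<4. (\<Sum>j<4. G y i j * warped_metric_inv f th j k) = (if i = k then 1 else 0)) \<and>
        (\<forall>i j. (4 \<le> i \<or> 4 \<le> j) \<longrightarrow> warped_metric_inv f th i j = 0)"
    using warped_metric_inv_right[OF f s]
    by (auto simp: G warped_metric_inv_def radial_def euler_cross_def)
next
  fix H assume H: "(\<forall>i<4. \<forall>k<4. (\<Sum>j<4. G y i j * H j k) = (if i = k then 1 else 0)) \<and>
                   (\<forall>i j. (4 \<le> i \<or> 4 \<le> j) \<longrightarrow> H i j = (0::real))"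
  show "H = warped_metric_inv f th"
  proof (intro ext)
    fix i k :: nat
    show "H i k = warped_metric_inv f th i k"
    proof (cases "i < 4 \<and> k < 4")
      case True
      then show ?thesis
        using inverse_matrix_unique[of 4 "warped_metric_inv f th" "G y" H i k] H
        by (simp add: G warped_metric_inv_left[OF f s])
    next
      case False
      then show ?thesis
        using H by (auto simp: warped_metric_inv_def radial_def euler_cross_def)
    qed
  qed
qed

definition radial_mix :: "nat \<Rightarrow> nat \<Rightarrow> nat \<Rightarrow> real" where
  "radial_mix i k l = (if i \<noteq> 0 \<and> ((k = 0 \<and> l = i) \<or> (l = 0 \<and> k = i)) then 1 else 0)"

definition s3_chr_sin :: "nat \<Rightarrow> nat \<Rightarrow> nat \<Rightarrow> real" where
  "s3_chr_sin i k l = (if i = 1 \<and> ((k = 2 \<and> l = 3) \<or> (k = 3 \<and> l = 2)) then 1 else 0)"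

definition s3_chr_csc :: "nat \<Rightarrow> nat \<Rightarrow> nat \<Rightarrow> real" where
  "s3_chr_csc i k l =
     (if (i = 2 \<and> ((k = 1 \<and> l = 3) \<or> (k = 3 \<and> l = 1))) \<or> (i = 3 \<and> ((k = 1 \<and> l = 2) \<or> (k = 2 \<and> l = 1)))
      then -1 else 0)"

definition s3_chr_cot :: "nat \<Rightarrow> nat \<Rightarrow> nat \<Rightarrow> real" where
  "s3_chr_cot i k l =
     (if (i = 2 \<and> ((k = 1 \<and> l = 2) \<or> (k = 2 \<and> l = 1))) \<or> (i = 3 \<and> ((k = 1 \<and> l = 3) \<or> (k = 3 \<and> l = 1)))
      then 1 else 0)"

definition warped_christoffel :: "real \<Rightarrow> real \<Rightarrow> real \<Rightarrow> nat \<Rightarrow> nat \<Rightarrow> nat \<Rightarrow> real" where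
  "warped_christoffel f f' th i k l =
     - (f * f') / 4 * radial i * s3_metric th k l + f' / f * radial_mix i k l
     + sin th / 2 * s3_chr_sin i k l + 1 / (2 * sin th) * s3_chr_csc i k l
     + cos th / (2 * sin th) * s3_chr_cot i k l"

definition warped_metric_deriv :: "nat \<Rightarrow> real \<Rightarrow> real \<Rightarrow> real \<Rightarrow> nat \<Rightarrow> nat \<Rightarrow> real" where
  "warped_metric_deriv k f f' th m l =
     (if k = 0 then f * f' / 2 * s3_metric th m l
      else if k = 1 then - (f\<^sup>2 / 4) * sin th * euler_cross m l
      else 0)"

lemma warped_christoffel_formula:
  assumes "f \<noteq> 0" "sin th \<noteq> 0" "i < 4" "k < 4" "l < 4"
  shows "(1/2) * (\<Sum>m<4. warped_metric_inv f th i m *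
            (warped_metric_deriv k f f' th m l + warped_metric_deriv l f f' th m k
             - warped_metric_deriv m f f' th k l))
         = warped_christoffel f f' th i k l"
proof -
  have sq: "(sin th)\<^sup>2 = 1 - (cos th)\<^sup>2" by (simp add: sin_squared_eq)
  have s2: "1 - (cos th)\<^sup>2 \<noteq> 0" using assms(2) by (simp add: sq[symmetric])
  have ss: "sin th * sin th = 1 - cos th * cos th" using sq by (simp add: power2_eq_square)
  have cc: "cos th * (cos th * x) = x - sin th * (sin th * x)" for x
    by (simp add: ss algebra_simps)
  from assms(3,4,5) show ?thesis
    unfolding sum_lessThan_4 warped_metric_inv_def warped_metric_deriv_def warped_christoffel_def
      s3_metric_def euler_diag_def euler_cross_def radial_def radial_mix_def
      s3_chr_sin_def s3_chr_csc_def s3_chr_cot_def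
    apply (simp add: less_Suc_eq numeral_eq_Suc)
    apply (elim disjE)
    apply (simp_all add: sq field_simps s2 assms)
    apply (simp_all add: cc algebra_simps)
    done
qed

lemma cpd_eqI:
  assumes "open S" "x i \<in> S" "\<And>t. t \<in> S \<Longrightarrow> F (x(i := t)) = g t" "(g has_real_derivative D) (at (x i))"
  shows "cpd i F x = D"
proof -
  have "((\<lambda>t. F (x(i := t))) has_real_derivative D) (at (x i))"
    by (rule has_field_derivative_transform_within_open[OF assms(4) assms(1,2)]) (use assms(3) in auto)
  then show ?thesis
    unfolding cpd_def by (rule DERIV_imp_deriv)
qed

lemma cpd_s4_metric_diagonal:
  assumes F': "\<And>t. (F has_real_derivative F' t) (at t)"
  shows "cpd k (\<lambda>y. s4_metric F F y m l) x = warped_metric_deriv k (F (x 0)) (F' (x 0)) (x 1) m l"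
proof -
  consider "k = 0" | "k = 1" | "k \<noteq> 0 \<and> k \<noteq> 1" by blast
  then show ?thesis
  proof cases
    case 1
    show ?thesis
    proof (rule cpd_eqI[OF open_UNIV UNIV_I, where g = "\<lambda>t. warped_metric (F t) (x 1) m l"])
      show "((\<lambda>t. warped_metric (F t) (x 1) m l) has_real_derivative
              warped_metric_deriv k (F (x 0)) (F' (x 0)) (x 1) m l) (at (x k))"
        unfolding warped_metric_def warped_metric_deriv_def using 1
        by (auto intro!: derivative_eq_intros F' simp: power2_eq_square)
    qed (use 1 in \<open>simp add: s4_metric_diagonal\<close>)
  next
    case 2
    show ?thesis
    proof (rule cpd_eqI[OF open_UNIV UNIV_I, where g = "\<lambda>t. warped_metric (F (x 0)) t m l"])
      show "((\<lambda>t. warped_metric (F (x 0)) t m l) has_real_derivative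
              warped_metric_deriv k (F (x 0)) (F' (x 0)) (x 1) m l) (at (x k))"
        unfolding warped_metric_def warped_metric_deriv_def s3_metric_def using 2
        by (auto intro!: derivative_eq_intros simp: power2_eq_square)
    qed (use 2 in \<open>simp add: s4_metric_diagonal\<close>)
  next
    case 3
    show ?thesis
      by (rule cpd_eqI[OF open_UNIV UNIV_I, where g = "\<lambda>t. warped_metric (F (x 0)) (x 1) m l"])
        (use 3 in \<open>simp_all add: s4_metric_diagonal warped_metric_deriv_def\<close>)
  qed
qed

lemma christoffel_s4_metric_diagonal:
  assumes F': "\<And>t. (F has_real_derivative F' t) (at t)"
    and f: "F (y 0) \<noteq> 0" and s: "sin (y 1) \<noteq> 0" and "i < 4" "k < 4" "l < 4"
  shows "christoffel (s4_metric F F) y i k l = warped_christoffel (F (y 0)) (F' (y 0)) (y 1) i k l"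
proof -
  have "ginv (s4_metric F F) y = warped_metric_inv (F (y 0)) (y 1)"
    by (rule ginv_warped_metric[of "s4_metric F F" y "F (y 0)" "y 1", OF s4_metric_diagonal f s])
  then show ?thesis
    unfolding christoffel_def cpd_s4_metric_diagonal[OF F']
    using warped_christoffel_formula[OF f s \<open>i < 4\<close> \<open>k < 4\<close> \<open>l < 4\<close>] by simp
qed

definition warped_christoffel_deriv_r :: "real \<Rightarrow> real \<Rightarrow> real \<Rightarrow> real \<Rightarrow> nat \<Rightarrow> nat \<Rightarrow> nat \<Rightarrow> real" where
  "warped_christoffel_deriv_r f f' f'' th i k l =
     - (f' * f' + f * f'') / 4 * radial i * s3_metric th k l + (f'' * f - f' * f') / f\<^sup>2 * radial_mix i k l"

definition warped_christoffel_deriv_theta :: "real \<Rightarrow> real \<Rightarrow> real \<Rightarrow> nat \<Rightarrow> nat \<Rightarrow> nat \<Rightarrow> real" where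
  "warped_christoffel_deriv_theta f f' th i k l =
     (f * f') / 4 * radial i * sin th * euler_cross k l + cos th / 2 * s3_chr_sin i k l
     - cos th / (2 * (sin th)\<^sup>2) * s3_chr_csc i k l - 1 / (2 * (sin th)\<^sup>2) * s3_chr_cot i k l"

definition warped_christoffel_deriv :: "nat \<Rightarrow> real \<Rightarrow> real \<Rightarrow> real \<Rightarrow> real \<Rightarrow> nat \<Rightarrow> nat \<Rightarrow> nat \<Rightarrow> real" where
  "warped_christoffel_deriv k f f' f'' th i l j =
     (if k = 0 then warped_christoffel_deriv_r f f' f'' th i l j
      else if k = 1 then warped_christoffel_deriv_theta f f' th i l j
      else 0)"

lemma warped_christoffel_has_derivative_r:
  assumes "(F has_real_derivative F' t) (at t)" "(F' has_real_derivative F'' t) (at t)" "F t \<noteq> 0"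
  shows "((\<lambda>t. warped_christoffel (F t) (F' t) th i k l) has_real_derivative
           warped_christoffel_deriv_r (F t) (F' t) (F'' t) th i k l) (at t)"
  unfolding warped_christoffel_def warped_christoffel_deriv_r_def
  using assms by (auto intro!: derivative_eq_intros simp: field_simps power2_eq_square)

lemma warped_christoffel_has_derivative_theta:
  assumes s: "sin th \<noteq> 0"
  shows "((\<lambda>t. warped_christoffel f f' t i k l) has_real_derivative
           warped_christoffel_deriv_theta f f' th i k l) (at th)"
proof -
  have pyth: "cos th * (cos th * X) + sin th * (sin th * X) = X" for X :: real
  proof -
    have "cos th * (cos th * X) + sin th * (sin th * X) = (cos th * cos th + sin th * sin th) * X"
      by (simp only: distrib_right mult.assoc)
    then show ?thesis by simp
  qed
  show ?thesis
    unfolding warped_christoffel_def warped_christoffel_deriv_theta_def s3_metric_def using s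
    by (auto intro!: derivative_eq_intros simp: field_simps power2_eq_square) (simp add: pyth)
qed

lemma cpd_christoffel_s4_metric_diagonal:
  assumes F': "\<And>t. (F has_real_derivative F' t) (at t)"
    and F'': "\<And>t. (F' has_real_derivative F'' t) (at t)"
    and f: "F (x 0) \<noteq> 0" and s: "sin (x 1) \<noteq> 0" and idx: "i < 4" "l < 4" "j < 4"
  shows "cpd k (\<lambda>y. christoffel (s4_metric F F) y i l j) x =
           warped_christoffel_deriv k (F (x 0)) (F' (x 0)) (F'' (x 0)) (x 1) i l j"
proof -
  note christoffel = christoffel_s4_metric_diagonal[OF F' _ _ idx]
  consider "k = 0" | "k = 1" | "k \<noteq> 0 \<and> k \<noteq> 1" by blast
  then show ?thesis
  proof cases
    case 1
    have "continuous_on UNIV F"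
      using F' by (meson DERIV_continuous continuous_at_imp_continuous_on)
    then have "open {t. F t \<noteq> 0}"
      by (rule open_Collect_neq[OF _ continuous_on_const])
    then show ?thesis
      by (rule cpd_eqI[where g = "\<lambda>t. warped_christoffel (F t) (F' t) (x 1) i l j"])
        (use 1 f s christoffel warped_christoffel_has_derivative_r[of F F' "x 0" F'', OF F' F'' f] in
          \<open>simp_all add: warped_christoffel_deriv_def\<close>)
  next
    case 2
    have "continuous_on UNIV (sin :: real \<Rightarrow> real)"
      by (rule continuous_at_imp_continuous_on) simp
    then have "open {t::real. sin t \<noteq> 0}"
      by (rule open_Collect_neq[OF _ continuous_on_const])
    then show ?thesis
      by (rule cpd_eqI[where g = "\<lambda>t. warped_christoffel (F (x 0)) (F' (x 0)) t i l j"])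
        (use 2 f s christoffel warped_christoffel_has_derivative_theta[OF s] in
          \<open>simp_all add: warped_christoffel_deriv_def\<close>)
  next
    case 3
    show ?thesis
      by (rule cpd_eqI[OF open_UNIV UNIV_I, where g = "\<lambda>t. warped_christoffel (F (x 0)) (F' (x 0)) (x 1) i l j"])
        (use 3 f s christoffel in \<open>simp_all add: warped_christoffel_deriv_def\<close>)
  qed
qed

definition warped_riemann_up :: "real \<Rightarrow> real \<Rightarrow> real \<Rightarrow> real \<Rightarrow> nat \<Rightarrow> nat \<Rightarrow> nat \<Rightarrow> nat \<Rightarrow> real" where
  "warped_riemann_up f f' f'' th i j k l =
     warped_christoffel_deriv k f f' f'' th i l j - warped_christoffel_deriv l f f' f'' th i k j +
     (\<Sum>m<4. warped_christoffel f f' th i k m * warped_christoffel f f' th m l j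
            - warped_christoffel f f' th i l m * warped_christoffel f f' th m k j)"

lemma riemann_s4_metric_diagonal_sum:
  assumes F': "\<And>t. (F has_real_derivative F' t) (at t)"
    and F'': "\<And>t. (F' has_real_derivative F'' t) (at t)"
    and f: "F (x 0) \<noteq> 0" and s: "sin (x 1) \<noteq> 0" and idx: "j < 4" "k < 4" "l < 4"
  shows "riemann (s4_metric F F) x i j k l =
           (\<Sum>m<4. warped_metric (F (x 0)) (x 1) i m *
                   warped_riemann_up (F (x 0)) (F' (x 0)) (F'' (x 0)) (x 1) m j k l)"
proof -
  have "riemann_up (s4_metric F F) x m j k l = warped_riemann_up (F (x 0)) (F' (x 0)) (F'' (x 0)) (x 1) m j k l"
    if "m < 4" for m
    using idx that
    unfolding riemann_up_def warped_riemann_up_def sum_lessThan_4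
    by (simp add: cpd_christoffel_s4_metric_diagonal[OF F' F'' f s]
        christoffel_s4_metric_diagonal[OF F' f s])
  then show ?thesis
    unfolding riemann_def sum_lessThan_4 s4_metric_diagonal by simp
qed

definition kulkarni_nomizu :: "(nat \<Rightarrow> nat \<Rightarrow> real) \<Rightarrow> (nat \<Rightarrow> nat \<Rightarrow> real) \<Rightarrow> nat \<Rightarrow> nat \<Rightarrow> nat \<Rightarrow> nat \<Rightarrow> real" where
  "kulkarni_nomizu h k i j l m = h i l * k j m + h j m * k i l - h i m * k j l - h j l * k i m"

lemma warped_riemann_eq_kulkarni_nomizu:
  assumes f: "f \<noteq> 0" and s: "sin th \<noteq> 0" and idx: "i < 4" "j < 4" "k < 4" "l < 4"
  shows "(\<Sum>m<4. warped_metric f th i m * warped_riemann_up f f' f'' th m j k l) =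
           (1 - f'\<^sup>2) / f\<^sup>2 / 2 * kulkarni_nomizu (warped_metric f th) (warped_metric f th) i j k l
           + (- f'' / f - (1 - f'\<^sup>2) / f\<^sup>2) *
             kulkarni_nomizu (\<lambda>i j. radial i * radial j) (warped_metric f th) i j k l"
proof -
  have ss: "sin th * sin th = 1 - cos th * cos th" using sin_cos_squared_add3[of th] by linarith
  have cc: "cos th * (cos th * x) = x - sin th * (sin th * x)" for x
    by (simp add: ss algebra_simps)
  have cc2: "cos th * cos th = 1 - sin th * sin th" using ss by simp
  show ?thesis
    using less_4_cases[OF idx(1)] less_4_cases[OF idx(2)] less_4_cases[OF idx(3)] less_4_cases[OF idx(4)]
    apply (elim disjE; simp only:)
    unfolding sum_lessThan_4 kulkarni_nomizu_def warped_riemann_up_def warped_christoffel_deriv_def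
      warped_christoffel_deriv_r_def warped_christoffel_deriv_theta_def warped_christoffel_def
      warped_metric_def s3_metric_def euler_diag_def euler_cross_def radial_def radial_mix_def
      s3_chr_sin_def s3_chr_csc_def s3_chr_cot_def
    apply (simp_all add: field_simps f s power2_eq_square)
    apply ((simp_all add: cc algebra_simps)?)
    apply ((simp_all add: cc2 algebra_simps)?)
    done
qed

section \<open>Curvature in the orthonormal frame\<close>

definition frame_tensor2 :: "(nat \<Rightarrow> nat \<Rightarrow> real) \<Rightarrow> (nat \<Rightarrow> nat \<Rightarrow> real) \<Rightarrow> nat \<Rightarrow> nat \<Rightarrow> real" where
  "frame_tensor2 h E a c = (\<Sum>i<4. \<Sum>k<4. h i k * E a i * E c k)"

definition frame_tensor4 ::
  "(nat \<Rightarrow> nat \<Rightarrow> nat \<Rightarrow> nat \<Rightarrow> real) \<Rightarrow> (nat \<Rightarrow> nat \<Rightarrow> real) \<Rightarrow> nat \<Rightarrow> nat \<Rightarrow> nat \<Rightarrow> nat \<Rightarrow> real" where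
  "frame_tensor4 R E a b c d = (\<Sum>i<4. \<Sum>j<4. \<Sum>k<4. \<Sum>l<4. R i j k l * E a i * E b j * E c k * E d l)"

lemma frame_riemann_eq_frame_tensor4: "frame_riemann G E x a b c d = frame_tensor4 (riemann G x) (E x) a b c d"
  by (simp add: frame_riemann_def frame_tensor4_def)

lemma frame_tensor4_cong:
  assumes "\<And>i j k l. i < 4 \<Longrightarrow> j < 4 \<Longrightarrow> k < 4 \<Longrightarrow> l < 4 \<Longrightarrow> R i j k l = R' i j k l"
  shows "frame_tensor4 R E a b c d = frame_tensor4 R' E a b c d"
  unfolding frame_tensor4_def using assms by (intro sum.cong refl) auto

lemma frame_tensor4_lincomb:
  "frame_tensor4 (\<lambda>i j k l. \<alpha> * R i j k l + \<beta> * S i j k l) E a b c d =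
     \<alpha> * frame_tensor4 R E a b c d + \<beta> * frame_tensor4 S E a b c d"
  unfolding frame_tensor4_def by (simp add: sum.distrib sum_distrib_left algebra_simps)

lemma frame_tensor4_diff:
  "frame_tensor4 (\<lambda>i j k l. R i j k l - S i j k l) E a b c d = frame_tensor4 R E a b c d - frame_tensor4 S E a b c d"
  unfolding frame_tensor4_def by (simp add: sum_subtractf left_diff_distrib)

lemma frame_tensor4_swap_last:
  "frame_tensor4 (\<lambda>i j k l. R i j l k) E a b c d = frame_tensor4 R E a b d c"
proof -
  have "(\<Sum>k<4. \<Sum>l<4. R i j l k * E a i * E b j * E c k * E d l) =
        (\<Sum>k<4. \<Sum>l<4. R i j k l * E a i * E b j * E d k * E c l)" for i j
    by (subst sum.swap) (simp add: mult_ac)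
  then show ?thesis
    unfolding frame_tensor4_def by simp
qed

lemma frame_tensor4_product:
  "frame_tensor4 (\<lambda>i j k l. h i k * g j l) E a b c d = frame_tensor2 h E a c * frame_tensor2 g E b d"
  unfolding frame_tensor4_def frame_tensor2_def by (simp add: sum_product mult_ac)

lemma frame_tensor4_kulkarni_nomizu:
  "frame_tensor4 (kulkarni_nomizu h g) E a b c d =
     kulkarni_nomizu (frame_tensor2 h E) (frame_tensor2 g E) a b c d"
proof -
  define P where "P = (\<lambda>i j k l. h i k * g j l + g i k * h j l)"
  have P: "frame_tensor4 P E a b c d =
      frame_tensor2 h E a c * frame_tensor2 g E b d + frame_tensor2 g E a c * frame_tensor2 h E b d" for c d
    using frame_tensor4_lincomb[of 1 "\<lambda>i j k l. h i k * g j l" 1 "\<lambda>i j k l. g i k * h j l"]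
    by (simp add: P_def frame_tensor4_product)
  have "kulkarni_nomizu h g = (\<lambda>i j k l. P i j k l - P i j l k)"
    by (simp add: fun_eq_iff P_def kulkarni_nomizu_def algebra_simps)
  then have "frame_tensor4 (kulkarni_nomizu h g) E a b c d
      = frame_tensor4 P E a b c d - frame_tensor4 (\<lambda>i j k l. P i j l k) E a b c d"
    by (simp only: frame_tensor4_diff)
  also have "\<dots> = frame_tensor4 P E a b c d - frame_tensor4 P E a b d c"
    \<comment> \<open>instantiated: with R left open the rule matches every abstraction and loops\<close>
    by (simp only: frame_tensor4_swap_last[of P])
  finally show ?thesis
    by (simp add: P kulkarni_nomizu_def algebra_simps)
qed

definition warped_frame :: "real \<Rightarrow> real \<Rightarrow> nat \<Rightarrow> nat \<Rightarrow> real" where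
  "warped_frame f th a i =
     (if a = 0 \<and> i = 1 then 2 / f
      else if a = 1 \<and> i = 2 then 2 / (f * sin th)
      else if a = 1 \<and> i = 3 then - 2 * cos th / (f * sin th)
      else if a = 2 \<and> i = 3 then 2 / f
      else if a = 3 \<and> i = 0 then 1
      else 0)"

lemma s4_frame_diagonal: "s4_frame F F x = warped_frame (F (x 0)) (x 1)"
  by (simp add: fun_eq_iff s4_frame_def warped_frame_def)

lemma warped_frame_orthonormal:
  assumes f: "f \<noteq> 0" and s: "sin th \<noteq> 0" and "a < 4" "c < 4"
  shows "frame_tensor2 (warped_metric f th) (warped_frame f th) a c = (if a = c then 1 else 0)"
proof -
  have "cos th * cos th = 1 - sin th * sin th" using sin_cos_squared_add3[of th] by linarith
  then show ?thesis
    using less_4_cases[OF \<open>a < 4\<close>] less_4_cases[OF \<open>c < 4\<close>]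
    apply (elim disjE; simp only:)
    unfolding frame_tensor2_def sum_lessThan_4 warped_metric_def warped_frame_def s3_metric_def
      euler_diag_def euler_cross_def radial_def
    apply (simp_all add: field_simps f s power2_eq_square)
    apply ((simp_all add: algebra_simps)?)
    done
qed

lemma warped_frame_radial:
  "frame_tensor2 (\<lambda>i j. radial i * radial j) (warped_frame f th) a c = (if a = 3 \<and> c = 3 then 1 else 0)"
  by (simp add: frame_tensor2_def sum_lessThan_4 radial_def warped_frame_def)

lemma riemann_s4_metric_diagonal:
  assumes F': "\<And>t. (F has_real_derivative F' t) (at t)"
    and F'': "\<And>t. (F' has_real_derivative F'' t) (at t)"
    and f: "F (x 0) \<noteq> 0" and s: "sin (x 1) \<noteq> 0" and idx: "i < 4" "j < 4" "k < 4" "l < 4"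
  shows "riemann (s4_metric F F) x i j k l =
           (1 - (F' (x 0))\<^sup>2) / (F (x 0))\<^sup>2 / 2 *
             kulkarni_nomizu (warped_metric (F (x 0)) (x 1)) (warped_metric (F (x 0)) (x 1)) i j k l
           + (- F'' (x 0) / F (x 0) - (1 - (F' (x 0))\<^sup>2) / (F (x 0))\<^sup>2) *
             kulkarni_nomizu (\<lambda>i j. radial i * radial j) (warped_metric (F (x 0)) (x 1)) i j k l"
  using riemann_s4_metric_diagonal_sum[OF F' F'' f s idx(2-4)]
    warped_riemann_eq_kulkarni_nomizu[OF f s idx]
  by simp

lemma kulkarni_nomizu_kronecker:
  "kulkarni_nomizu (\<lambda>a c. if a = c then 1 else 0) (\<lambda>a c. if a = c then 1 else 0) a b c d =
     2 * ((if a = c then 1 else 0) * (if b = d then 1 else 0) - (if a = d then 1 else 0) * (if b = c then 1 else 0))"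
  by (simp add: kulkarni_nomizu_def)

lemma frame_riemann_s4_metric_diagonal:
  assumes F': "\<And>t. (F has_real_derivative F' t) (at t)"
    and F'': "\<And>t. (F' has_real_derivative F'' t) (at t)"
    and f: "F (x 0) \<noteq> 0" and s: "sin (x 1) \<noteq> 0" and idx: "a < 4" "b < 4" "c < 4" "d < 4"
  defines "Kt \<equiv> (1 - (F' (x 0))\<^sup>2) / (F (x 0))\<^sup>2" and "Kr \<equiv> - F'' (x 0) / F (x 0)"
  shows "frame_riemann (s4_metric F F) (s4_frame F F) x a b c d =
           Kt * ((if a = c then 1 else 0) * (if b = d then 1 else 0)
                 - (if a = d then 1 else 0) * (if b = c then 1 else 0))
           + (Kr - Kt) * kulkarni_nomizu (\<lambda>a c. if a = 3 \<and> c = 3 then 1 else 0)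
                                         (\<lambda>a c. if a = c then 1 else 0) a b c d"
proof -
  let ?g = "warped_metric (F (x 0)) (x 1)" and ?E = "warped_frame (F (x 0)) (x 1)"
    and ?N = "\<lambda>i j. radial i * radial j"
  have "frame_riemann (s4_metric F F) (s4_frame F F) x a b c d =
          frame_tensor4 (\<lambda>i j k l. Kt / 2 * kulkarni_nomizu ?g ?g i j k l
                                  + (Kr - Kt) * kulkarni_nomizu ?N ?g i j k l) ?E a b c d"
    unfolding frame_riemann_eq_frame_tensor4 s4_frame_diagonal Kt_def Kr_def
    by (rule frame_tensor4_cong) (simp add: riemann_s4_metric_diagonal[OF F' F'' f s])
  also have "\<dots> = Kt / 2 * kulkarni_nomizu (frame_tensor2 ?g ?E) (frame_tensor2 ?g ?E) a b c d
                  + (Kr - Kt) * kulkarni_nomizu (frame_tensor2 ?N ?E) (frame_tensor2 ?g ?E) a b c d"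
    by (simp only: frame_tensor4_lincomb frame_tensor4_kulkarni_nomizu)
  also have "\<dots> = Kt / 2 * kulkarni_nomizu (\<lambda>a c. if a = c then 1 else 0) (\<lambda>a c. if a = c then 1 else 0) a b c d
                  + (Kr - Kt) * kulkarni_nomizu (\<lambda>a c. if a = 3 \<and> c = 3 then 1 else 0)
                                                (\<lambda>a c. if a = c then 1 else 0) a b c d"
    using idx by (simp only: kulkarni_nomizu_def warped_frame_orthonormal[OF f s] warped_frame_radial)
  finally show ?thesis
    by (simp add: kulkarni_nomizu_kronecker)
qed

section \<open>First-order deformations of the round sphere\<close>

lemma bigo_power2_at_0I:
  fixes R Q :: "real \<Rightarrow> real"
  assumes "\<forall>\<^sub>F \<epsilon> in at 0. R \<epsilon> = \<epsilon>\<^sup>2 * Q \<epsilon>" and "(Q \<longlongrightarrow> q) (at 0)"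
  shows "R \<in> O[at 0](\<lambda>\<epsilon>. \<epsilon>\<^sup>2)"
proof (rule bigoI_tendsto)
  have nz: "\<forall>\<^sub>F \<epsilon> in at (0::real). \<epsilon> \<noteq> 0"
    by (simp add: eventually_at_filter)
  with assms(1) have "\<forall>\<^sub>F \<epsilon> in at 0. R \<epsilon> / \<epsilon>\<^sup>2 = Q \<epsilon>"
    by eventually_elim simp
  with assms(2) show "((\<lambda>\<epsilon>. R \<epsilon> / \<epsilon>\<^sup>2) \<longlongrightarrow> q) (at 0)"
    by (simp add: tendsto_cong)
  from nz show "\<forall>\<^sub>F \<epsilon> in at (0::real). \<epsilon>\<^sup>2 \<noteq> 0"
    by (rule eventually_mono) simp
qed

text \<open>The tangential and radial sectional curvatures of dr^2 + F(r)^2 g_S3, for F = sin + \<epsilon> h at a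
  fixed r with s = sin r, c = cos r; the hypotheses on h say that h solves the linearized equations.\<close>
lemma first_order_curvatures:
  fixes s c h h' h'' \<kappa> :: real
  assumes pyth: "s\<^sup>2 + c\<^sup>2 = 1" and s: "s \<noteq> 0"
    and first_integral: "s * h + c * h' = \<kappa> * s\<^sup>2" and jacobi: "h'' + h = 2 * \<kappa> * s"
  shows "(\<lambda>\<epsilon>. (1 - (c + \<epsilon> * h')\<^sup>2) / (s + \<epsilon> * h)\<^sup>2 - (1 - 2 * \<epsilon> * \<kappa>)) \<in> O[at 0](\<lambda>\<epsilon>. \<epsilon>\<^sup>2)"
    and "(\<lambda>\<epsilon>. - (- s + \<epsilon> * h'') / (s + \<epsilon> * h) - (1 - 2 * \<epsilon> * \<kappa>)) \<in> O[at 0](\<lambda>\<epsilon>. \<epsilon>\<^sup>2)"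
proof -
  have "((\<lambda>\<epsilon>. s + \<epsilon> * h) \<longlongrightarrow> s) (at 0)"
    by (auto intro!: tendsto_eq_intros)
  then have nz: "\<forall>\<^sub>F \<epsilon> in at 0. s + \<epsilon> * h \<noteq> 0"
    using s tendsto_imp_eventually_ne by blast
  have tangential: "1 - (c + \<epsilon> * h')\<^sup>2 - (1 - 2 * \<epsilon> * \<kappa>) * (s + \<epsilon> * h)\<^sup>2
      = \<epsilon>\<^sup>2 * (- h'\<^sup>2 - h\<^sup>2 + 4 * \<kappa> * s * h + 2 * \<epsilon> * \<kappa> * h\<^sup>2)" for \<epsilon>
  proof -
    have "1 - (c + \<epsilon> * h')\<^sup>2 - (1 - 2 * \<epsilon> * \<kappa>) * (s + \<epsilon> * h)\<^sup>2
        - \<epsilon>\<^sup>2 * (- h'\<^sup>2 - h\<^sup>2 + 4 * \<kappa> * s * h + 2 * \<epsilon> * \<kappa> * h\<^sup>2)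
        = (1 - s\<^sup>2 - c\<^sup>2) - 2 * \<epsilon> * (s * h + c * h' - \<kappa> * s\<^sup>2)"
      by (simp add: algebra_simps power2_eq_square)
    then show ?thesis using pyth first_integral by simp
  qed
  have radial: "s - \<epsilon> * h'' - (1 - 2 * \<epsilon> * \<kappa>) * (s + \<epsilon> * h) = \<epsilon>\<^sup>2 * (2 * \<kappa> * h)" for \<epsilon>
  proof -
    have "s - \<epsilon> * h'' - (1 - 2 * \<epsilon> * \<kappa>) * (s + \<epsilon> * h) - \<epsilon>\<^sup>2 * (2 * \<kappa> * h)
        = - \<epsilon> * (h'' + h - 2 * \<kappa> * s)"
      by (simp add: algebra_simps power2_eq_square)
    then show ?thesis using jacobi by simp
  qed
  show "(\<lambda>\<epsilon>. (1 - (c + \<epsilon> * h')\<^sup>2) / (s + \<epsilon> * h)\<^sup>2 - (1 - 2 * \<epsilon> * \<kappa>)) \<in> O[at 0](\<lambda>\<epsilon>. \<epsilon>\<^sup>2)"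
  proof (rule bigo_power2_at_0I)
    show "\<forall>\<^sub>F \<epsilon> in at 0. (1 - (c + \<epsilon> * h')\<^sup>2) / (s + \<epsilon> * h)\<^sup>2 - (1 - 2 * \<epsilon> * \<kappa>) =
            \<epsilon>\<^sup>2 * ((- h'\<^sup>2 - h\<^sup>2 + 4 * \<kappa> * s * h + 2 * \<epsilon> * \<kappa> * h\<^sup>2) / (s + \<epsilon> * h)\<^sup>2)"
      using nz
    proof eventually_elim
      case (elim \<epsilon>)
      then show ?case
        using tangential[of \<epsilon>] by (simp add: field_simps)
    qed
    show "((\<lambda>\<epsilon>. (- h'\<^sup>2 - h\<^sup>2 + 4 * \<kappa> * s * h + 2 * \<epsilon> * \<kappa> * h\<^sup>2) / (s + \<epsilon> * h)\<^sup>2) \<longlongrightarrow>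
            (- h'\<^sup>2 - h\<^sup>2 + 4 * \<kappa> * s * h) / s\<^sup>2) (at 0)"
      using s by (auto intro!: tendsto_eq_intros)
  qed
  show "(\<lambda>\<epsilon>. - (- s + \<epsilon> * h'') / (s + \<epsilon> * h) - (1 - 2 * \<epsilon> * \<kappa>)) \<in> O[at 0](\<lambda>\<epsilon>. \<epsilon>\<^sup>2)"
  proof (rule bigo_power2_at_0I)
    show "\<forall>\<^sub>F \<epsilon> in at 0. - (- s + \<epsilon> * h'') / (s + \<epsilon> * h) - (1 - 2 * \<epsilon> * \<kappa>) =
            \<epsilon>\<^sup>2 * (2 * \<kappa> * h / (s + \<epsilon> * h))"
      using nz
    proof eventually_elim
      case (elim \<epsilon>)
      then show ?case
        using radial[of \<epsilon>] by (simp add: field_simps)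
    qed
    show "((\<lambda>\<epsilon>. 2 * \<kappa> * h / (s + \<epsilon> * h)) \<longlongrightarrow> 2 * \<kappa> * h / s) (at 0)"
      using s by (auto intro!: tendsto_eq_intros)
  qed
qed

lemma frame_riemann_first_order_deformation:
  fixes h h' h'' :: "real \<Rightarrow> real" and \<kappa> :: real and x :: "nat \<Rightarrow> real"
  defines "F \<equiv> \<lambda>\<epsilon> r. sin r + \<epsilon> * h r"
  assumes h': "\<And>t. (h has_real_derivative h' t) (at t)" and h'': "\<And>t. (h' has_real_derivative h'' t) (at t)"
    and first_integral: "sin (x 0) * h (x 0) + cos (x 0) * h' (x 0) = \<kappa> * (sin (x 0))\<^sup>2"
    and jacobi: "h'' (x 0) + h (x 0) = 2 * \<kappa> * sin (x 0)"
    and s: "sin (x 0) \<noteq> 0" "sin (x 1) \<noteq> 0" and idx: "a < 4" "b < 4" "c < 4" "d < 4"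
  shows "(\<lambda>\<epsilon>. frame_riemann (s4_metric (F \<epsilon>) (F \<epsilon>)) (s4_frame (F \<epsilon>) (F \<epsilon>)) x a b c d
            - (1 - 2 * \<epsilon> * \<kappa>) * ((if a = c then 1 else 0) * (if b = d then 1 else 0)
                                 - (if a = d then 1 else 0) * (if b = c then 1 else 0)))
         \<in> O[at 0](\<lambda>\<epsilon>. \<epsilon>\<^sup>2)"
proof -
  define D1 :: real where "D1 = (if a = c then 1 else 0) * (if b = d then 1 else 0)
                                - (if a = d then 1 else 0) * (if b = c then 1 else 0)"
  define D2 where "D2 = kulkarni_nomizu (\<lambda>a c. if a = 3 \<and> c = 3 then 1 else 0)
                                        (\<lambda>a c. if a = c then 1 else 0) a b c d"
  let ?s = "sin (x 0)" and ?c = "cos (x 0)"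
  define Kt where "Kt \<epsilon> = (1 - (?c + \<epsilon> * h' (x 0))\<^sup>2) / (?s + \<epsilon> * h (x 0))\<^sup>2" for \<epsilon>
  define Kr where "Kr \<epsilon> = - (- ?s + \<epsilon> * h'' (x 0)) / (?s + \<epsilon> * h (x 0))" for \<epsilon>
  have F': "(F \<epsilon> has_real_derivative cos t + \<epsilon> * h' t) (at t)" for \<epsilon> t
    unfolding F_def by (auto intro!: derivative_eq_intros h')
  have F'': "((\<lambda>t. cos t + \<epsilon> * h' t) has_real_derivative - sin t + \<epsilon> * h'' t) (at t)" for \<epsilon> t
    by (auto intro!: derivative_eq_intros h'')
  have "((\<lambda>\<epsilon>. ?s + \<epsilon> * h (x 0)) \<longlongrightarrow> ?s) (at 0)"
    by (auto intro!: tendsto_eq_intros)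
  then have "\<forall>\<^sub>F \<epsilon> in at 0. ?s + \<epsilon> * h (x 0) \<noteq> 0"
    using s(1) tendsto_imp_eventually_ne by blast
  then have "\<forall>\<^sub>F \<epsilon> in at 0.
          frame_riemann (s4_metric (F \<epsilon>) (F \<epsilon>)) (s4_frame (F \<epsilon>) (F \<epsilon>)) x a b c d - (1 - 2 * \<epsilon> * \<kappa>) * D1
          = (Kt \<epsilon> - (1 - 2 * \<epsilon> * \<kappa>)) * D1
            + ((Kr \<epsilon> - (1 - 2 * \<epsilon> * \<kappa>)) - (Kt \<epsilon> - (1 - 2 * \<epsilon> * \<kappa>))) * D2"
  proof eventually_elim
    case (elim \<epsilon>)
    then have "F \<epsilon> (x 0) \<noteq> 0" by (simp add: F_def)
    from frame_riemann_s4_metric_diagonal[OF F' F'' this s(2) idx]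
    have "frame_riemann (s4_metric (F \<epsilon>) (F \<epsilon>)) (s4_frame (F \<epsilon>) (F \<epsilon>)) x a b c d
            = Kt \<epsilon> * D1 + (Kr \<epsilon> - Kt \<epsilon>) * D2"
      by (simp add: Kt_def Kr_def D1_def D2_def F_def)
    then show ?case by (simp add: algebra_simps)
  qed
  moreover have "(\<lambda>\<epsilon>. (Kt \<epsilon> - (1 - 2 * \<epsilon> * \<kappa>)) * D1
            + ((Kr \<epsilon> - (1 - 2 * \<epsilon> * \<kappa>)) - (Kt \<epsilon> - (1 - 2 * \<epsilon> * \<kappa>))) * D2) \<in> O[at 0](\<lambda>\<epsilon>. \<epsilon>\<^sup>2)"
  proof -
    note curv = first_order_curvatures[OF sin_cos_squared_add s(1) first_integral jacobi]
    have const_mult: "(\<lambda>\<epsilon>. f \<epsilon> * C) \<in> O[at 0](\<lambda>\<epsilon>. \<epsilon>\<^sup>2)" if "f \<in> O[at 0](\<lambda>\<epsilon>. \<epsilon>\<^sup>2)" for f and C :: real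
      using that by (cases "C = 0") simp_all
    show ?thesis
      unfolding Kt_def Kr_def by (intro sum_in_bigo const_mult curv)
  qed
  ultimately show ?thesis
    unfolding D1_def by (simp add: landau_o.big.in_cong)
qed

lemma frame_riemann_perturbed_round_sphere:
  fixes c1 c2 :: real and x :: "nat \<Rightarrow> real"
  assumes x: "0 < x 0" "x 0 < pi" "0 < x 1" "x 1 < pi" and idx: "a < 4" "b < 4" "c < 4" "d < 4"
  shows "(\<lambda>\<epsilon>. frame_riemann (s4_metric (\<lambda>r. sin r + \<epsilon> * linearized_solution c1 c2 r)
                                       (\<lambda>r. sin r + \<epsilon> * linearized_solution c1 c2 r))
                           (s4_frame (\<lambda>r. sin r + \<epsilon> * linearized_solution c1 c2 r)
                                     (\<lambda>r. sin r + \<epsilon> * linearized_solution c1 c2 r)) x a b c d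
            - (1 - 2 * \<epsilon> * c2) * ((if a = c then 1 else 0) * (if b = d then 1 else 0)
                                 - (if a = d then 1 else 0) * (if b = c then 1 else 0)))
         \<in> O[at 0](\<lambda>\<epsilon>. \<epsilon>\<^sup>2)"
proof (rule frame_riemann_first_order_deformation[OF _ _ _ _ _ _ idx])
  show "(linearized_solution c1 c2 has_real_derivative - c1 * sin t + c2 * (t * sin t)) (at t)"
    "((\<lambda>t. - c1 * sin t + c2 * (t * sin t)) has_real_derivative - c1 * cos t + c2 * (sin t + t * cos t)) (at t)"
    for t
    unfolding linearized_solution_def[abs_def] by (auto intro!: derivative_eq_intros simp: algebra_simps)
  show "sin (x 0) * linearized_solution c1 c2 (x 0) + cos (x 0) * (- c1 * sin (x 0) + c2 * (x 0 * sin (x 0)))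
          = c2 * (sin (x 0))\<^sup>2"
    "- c1 * cos (x 0) + c2 * (sin (x 0) + x 0 * cos (x 0)) + linearized_solution c1 c2 (x 0) = 2 * c2 * sin (x 0)"
    by (simp_all add: linearized_solution_def algebra_simps power2_eq_square)
  show "sin (x 0) \<noteq> 0" "sin (x 1) \<noteq> 0"
    using x sin_gt_zero by fastforce+
qed

theorem mainTheorem2:
  shows
   "(\<forall>p q :: real \<Rightarrow> real.
       smooth_on_closed 0 pi p \<and> smooth_on_closed 0 pi q \<longrightarrow>
       ((\<forall>r\<in>{0<..<pi}.
           deriv (deriv p) r - q r
             = (deriv p r + deriv q r) * cot r + 3 / (sin r)\<^sup>2 * (p r - q r) \<and>
           deriv (deriv q) r + q r - 2 * p r
             = 2 * deriv p r * cot r - 6 / (sin r)\<^sup>2 * (p r - q r))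
        \<longleftrightarrow>
        (\<exists>c1 c2 :: real. \<forall>r\<in>{0..pi}.
           p r = c1 * cos r + c2 * (sin r - r * cos r) \<and>
           q r = c1 * cos r + c2 * (sin r - r * cos r))))
    \<and>
    (\<forall>c1 c2 :: real. \<forall>x :: nat \<Rightarrow> real. \<forall>a<4. \<forall>b<4. \<forall>c<4. \<forall>d<4.
       0 < x 0 \<and> x 0 < pi \<and> 0 < x 1 \<and> x 1 < pi \<longrightarrow>
       (\<lambda>\<epsilon>::real.
          frame_riemann
            (s4_metric (\<lambda>r. sin r + \<epsilon> * (c1 * cos r + c2 * (sin r - r * cos r)))
                       (\<lambda>r. sin r + \<epsilon> * (c1 * cos r + c2 * (sin r - r * cos r))))
            (s4_frame (\<lambda>r. sin r + \<epsilon> * (c1 * cos r + c2 * (sin r - r * cos r)))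
                      (\<lambda>r. sin r + \<epsilon> * (c1 * cos r + c2 * (sin r - r * cos r))))
            x a b c d
          - (1 - 2 * \<epsilon> * c2) *
              ((if a = c then 1 else 0) * (if b = d then 1 else 0)
               - (if a = d then 1 else 0) * (if b = c then 1 else 0)))
       \<in> O[at 0](\<lambda>\<epsilon>. \<epsilon>\<^sup>2))"
  apply (intro conjI allI impI)
  subgoal for p q
    using linearized_einstein_iff[of p q] unfolding linearized_einstein_def linearized_solution_def by blast
  subgoal for c1 c2 x a b c d
    using frame_riemann_perturbed_round_sphere[of x a b c d c1 c2] unfolding linearized_solution_def by blast
  done

end
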